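(* Let $G$ be a connected partial cube with $\Theta$-classes $E_1,\ldots,E_d$. For each $k$ let $U_k$ and $U_k'$ be the two connected components of $G-E_k$, and for $k,l\in\{1,\ldots,d\}$ set $m_{kl}^{11}=|E(U_k)\cap E(U_l)|$, $m_{kl}^{10}=|E(U_k)\cap E(U_l')|$, $m_{kl}^{01}=|E(U_k')\cap E(U_l)|$, $m_{kl}^{00}=|E(U_k')\cap E(U_l')|$. Then $$WW_e(G)=2W_e(G)+\sum_{k=1}^{d-1}\sum_{l=k+1}^{d}\big(m_{kl}^{11}m_{kl}^{00}+m_{kl}^{10}m_{kl}^{01}\big)-\binom{|E(G)|}{2}.$$
   Context: A partial cube is a graph isomorphic to an isometric subgraph of a hypercube. The Djoković–Winkler relation $\Theta$ on $E(G)$: $xy\,\Theta\,uv$ iff $d(x,u)+d(y,v)\neq d(x,v)+d(y,u)$, with $d$ the shortest-path distance. In a partial cube $\Theta$ is an equivalence relation whose classes are the $\Theta$-classes, and removing a $\Theta$-class leaves exactly two connected components. The distance $d(e,f)$ between edges is the distance between $e$ and $f$ as vertices of the line graph $L(G)$. The edge-Wiener index is $W_e(G)=\sum_{\{e,f\}\subseteq E(G)}d(e,f)$ and the edge-hyper-Wiener index is $WW_e(G)=\frac12\sum_{\{e,f\}\subseteq E(G)}d(e,f)+\frac12\sum_{\{e,f\}\subseteq E(G)}d(e,f)^2$, sums over unordered pairs of distinct edges. *)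

theory Defs
  imports Complex_Main
begin

definition simple_graph :: "'a set \<Rightarrow> 'a set set \<Rightarrow> bool" where
  "simple_graph V E \<longleftrightarrow> finite V \<and> (\<forall>e\<in>E. \<exists>x y. x \<in> V \<and> y \<in> V \<and> x \<noteq> y \<and> e = {x, y})"

definition adj :: "'a set set \<Rightarrow> 'a \<Rightarrow> 'a \<Rightarrow> bool" where
  "adj E x y \<longleftrightarrow> {x, y} \<in> E \<and> x \<noteq> y"

definition gdist :: "('b \<Rightarrow> 'b \<Rightarrow> bool) \<Rightarrow> 'b \<Rightarrow> 'b \<Rightarrow> nat" where
  "gdist R x y = (LEAST n. (R ^^ n) x y)"

definition vdist :: "'a set set \<Rightarrow> 'a \<Rightarrow> 'a \<Rightarrow> nat" where
  "vdist E = gdist (adj E)"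

definition connected_graph :: "'a set \<Rightarrow> 'a set set \<Rightarrow> bool" where
  "connected_graph V E \<longleftrightarrow> (\<forall>x\<in>V. \<forall>y\<in>V. (adj E)\<^sup>*\<^sup>* x y)"

definition components :: "'a set \<Rightarrow> 'a set set \<Rightarrow> 'a set set" where
  "components V E = {{y \<in> V. (adj E)\<^sup>*\<^sup>* x y} | x. x \<in> V}"

(* partial cube: isometric embedding into a hypercube Q_n (vertices = 0/1-vectors of
   length n, distance = Hamming distance) *)
definition partial_cube :: "'a set \<Rightarrow> 'a set set \<Rightarrow> bool" where
  "partial_cube V E \<longleftrightarrow> simple_graph V E \<and>
     (\<exists>(n::nat) (f :: 'a \<Rightarrow> nat \<Rightarrow> bool). inj_on f V \<and>
        (\<forall>x\<in>V. \<forall>y\<in>V. vdist E x y = card {i. i < n \<and> f x i \<noteq> f y i}))"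

definition Theta :: "'a set set \<Rightarrow> 'a set \<Rightarrow> 'a set \<Rightarrow> bool" where
  "Theta E e f \<longleftrightarrow> (\<exists>x y u v. e = {x, y} \<and> f = {u, v} \<and>
      vdist E x u + vdist E y v \<noteq> vdist E x v + vdist E y u)"

definition Theta_rel :: "'a set set \<Rightarrow> ('a set \<times> 'a set) set" where
  "Theta_rel E = {(e, f). e \<in> E \<and> f \<in> E \<and> Theta E e f}"

definition Theta_classes :: "'a set set \<Rightarrow> 'a set set set" where
  "Theta_classes E = E // Theta_rel E"

definition ladj :: "'a set set \<Rightarrow> 'a set \<Rightarrow> 'a set \<Rightarrow> bool" where
  "ladj E e f \<longleftrightarrow> e \<in> E \<and> f \<in> E \<and> e \<noteq> f \<and> e \<inter> f \<noteq> {}"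

definition edist :: "'a set set \<Rightarrow> 'a set \<Rightarrow> 'a set \<Rightarrow> nat" where
  "edist E = gdist (ladj E)"

(* sums over unordered pairs of distinct edges, written as half the sum over ordered pairs *)
definition edge_wiener :: "'a set set \<Rightarrow> real" where
  "edge_wiener E = (\<Sum>(e, f) \<in> {(e, f). e \<in> E \<and> f \<in> E \<and> e \<noteq> f}. real (edist E e f)) / 2"

definition edge_hyper_wiener :: "'a set set \<Rightarrow> real" where
  "edge_hyper_wiener E =
     (1/2) * ((\<Sum>(e, f) \<in> {(e, f). e \<in> E \<and> f \<in> E \<and> e \<noteq> f}. real (edist E e f)) / 2)
   + (1/2) * ((\<Sum>(e, f) \<in> {(e, f). e \<in> E \<and> f \<in> E \<and> e \<noteq> f}. real (edist E e f) ^ 2) / 2)"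

definition induced_edges :: "'a set set \<Rightarrow> 'a set \<Rightarrow> 'a set set" where
  "induced_edges E U = {e \<in> E. e \<subseteq> U}"

end

theory Submission
  imports Defs
begin

text \<open>
  An isometric embedding F of G into a hypercube labels each edge by the unique coordinate in
  which its endpoints differ. Two edges are in relation \<open>\<Theta>\<close> exactly when they carry the same
  label, and deleting the class with label i splits G into the half-cubes \<open>F \<cdot> i = \<beta>\<close> and
  \<open>F \<cdot> i = \<not>\<beta>\<close>. For distinct edges e, f this gives \<open>d(e, f) = 1 + s(e, f)\<close>, where s counts
  the classes k with e and f on opposite sides \<open>U\<^sub>k\<close>, \<open>U\<^sub>k'\<close>: every such coordinate has to change
  along a walk in the line graph, and conversely endpoints of e and f can be chosen that differ
  only in these coordinates. Writing s as a sum of indicators, the sum of \<open>s\<^sup>2\<close> over ordered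
  pairs is the sum of s plus the number of pairs separated by two distinct classes k and l,
  which is \<open>2 (m\<^sub>k\<^sub>l\<^sup>1\<^sup>1 m\<^sub>k\<^sub>l\<^sup>0\<^sup>0 + m\<^sub>k\<^sub>l\<^sup>1\<^sup>0 m\<^sub>k\<^sub>l\<^sup>0\<^sup>1)\<close>; substituting into the definitions of
  \<open>W\<^sub>e\<close> and \<open>WW\<^sub>e\<close> yields the identity.
\<close>

lemma sum_offdiag_eq_twice_sum_less:
  fixes G :: "'k::linorder \<Rightarrow> 'k \<Rightarrow> 'b::comm_semiring_1"
  assumes "finite K" and sym: "\<And>k l. G k l = G l k"
  shows "(\<Sum>k\<in>K. \<Sum>l\<in>K - {k}. G k l) = 2 * (\<Sum>k\<in>K. \<Sum>l\<in>{l\<in>K. k < l}. G k l)"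
proof -
  have split: "(\<Sum>l\<in>K - {k}. G k l) = (\<Sum>l\<in>{l\<in>K. l < k}. G k l) + (\<Sum>l\<in>{l\<in>K. k < l}. G k l)" for k
  proof -
    have "(\<Sum>l\<in>K - {k}. G k l) = (\<Sum>l\<in>{l\<in>K. l < k} \<union> {l\<in>K. k < l}. G k l)"
      by (rule sum.cong) auto
    also have "\<dots> = (\<Sum>l\<in>{l\<in>K. l < k}. G k l) + (\<Sum>l\<in>{l\<in>K. k < l}. G k l)"
      by (rule sum.union_disjoint) (use \<open>finite K\<close> in auto)
    finally show ?thesis .
  qed
  have "(\<Sum>k\<in>K. \<Sum>l\<in>{l\<in>K. l < k}. G k l) = (\<Sum>l\<in>K. \<Sum>k\<in>{k\<in>K. l < k}. G k l)"
    by (rule sum.swap_restrict) (use \<open>finite K\<close> in auto)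
  also have "\<dots> = (\<Sum>k\<in>K. \<Sum>l\<in>{l\<in>K. k < l}. G k l)" by (simp add: sym)
  finally show ?thesis by (simp add: split sum.distrib mult_2)
qed

lemma sum_offdiag_atLeastAtMost_eq_twice:
  fixes G :: "nat \<Rightarrow> nat \<Rightarrow> 'b::comm_semiring_1"
  assumes "\<And>k l. G k l = G l k"
  shows "(\<Sum>k\<in>{1..d}. \<Sum>l\<in>{1..d} - {k}. G k l) = 2 * (\<Sum>k = 1..d - 1. \<Sum>l = k + 1..d. G k l)"
proof -
  have "(\<Sum>k\<in>{1..d}. \<Sum>l\<in>{l\<in>{1..d}. k < l}. G k l) = (\<Sum>k\<in>{1..d}. \<Sum>l = k + 1..d. G k l)"
    by (intro sum.cong refl arg_cong[where f = "sum _"]) auto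
  also have "\<dots> = (\<Sum>k = 1..d - 1. \<Sum>l = k + 1..d. G k l)"
    by (rule sum.mono_neutral_right) auto
  finally show ?thesis using sum_offdiag_eq_twice_sum_less[of "{1..d}" G, OF _ assms] by simp
qed

lemma card_filter_eq_sum_of_bool: "finite A \<Longrightarrow> card {x\<in>A. P x} = (\<Sum>x\<in>A. of_bool (P x))"
  by (simp add: Collect_conj_eq Int_commute)

lemma sum_card_filter_squared:
  assumes X: "finite X" and K: "finite K"
  shows "(\<Sum>x\<in>X. card {k\<in>K. P k x} ^ 2)
    = (\<Sum>x\<in>X. card {k\<in>K. P k x}) + (\<Sum>k\<in>K. \<Sum>l\<in>K - {k}. card {x\<in>X. P k x \<and> P l x})"
proof -
  have "(\<Sum>x\<in>X. card {k\<in>K. P k x} ^ 2) = (\<Sum>x\<in>X. \<Sum>k\<in>K. \<Sum>l\<in>K. of_bool (P k x \<and> P l x))"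
    by (simp add: power2_eq_square card_filter_eq_sum_of_bool[OF K] sum_product of_bool_conj)
  also have "\<dots> = (\<Sum>k\<in>K. \<Sum>l\<in>K. card {x\<in>X. P k x \<and> P l x})"
    by (simp add: card_filter_eq_sum_of_bool[OF X] sum.swap[of _ X] sum.swap[of _ X K])
  also have "\<dots> = (\<Sum>k\<in>K. card {x\<in>X. P k x}) + (\<Sum>k\<in>K. \<Sum>l\<in>K - {k}. card {x\<in>X. P k x \<and> P l x})"
    by (simp add: sum.remove[OF K] sum.distrib)
  also have "(\<Sum>k\<in>K. card {x\<in>X. P k x}) = (\<Sum>x\<in>X. card {k\<in>K. P k x})"
    unfolding card_filter_eq_sum_of_bool[OF X] card_filter_eq_sum_of_bool[OF K] by (rule sum.swap)
  finally show ?thesis .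
qed

lemma card_offdiag_pairs:
  assumes "finite E"
  shows "card {(e, f). e \<in> E \<and> f \<in> E \<and> e \<noteq> f} = 2 * (card E choose 2)"
proof -
  have offdiag: "{(e, f). e \<in> E \<and> f \<in> E \<and> e \<noteq> f} = E \<times> E - (\<lambda>e. (e, e)) ` E" by auto
  have "card ((\<lambda>e. (e, e)) ` E) = card E" by (rule card_image) (auto intro: inj_onI)
  then have "card {(e, f). e \<in> E \<and> f \<in> E \<and> e \<noteq> f} = card E * card E - card E"
    unfolding offdiag using assms by (subst card_Diff_subset) (auto simp: card_cartesian_product)
  also have "\<dots> = 2 * (card E choose 2)"
    by (cases "card E") (simp_all add: choose_two)
  finally show ?thesis .
qed

lemma edge_hyper_wiener_eq_via_cuts:
  fixes S :: "'k \<Rightarrow> 'a set \<Rightarrow> 'a set \<Rightarrow> bool"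
  assumes "finite E" and "finite K"
    and edist: "\<And>e f. e \<in> E \<Longrightarrow> f \<in> E \<Longrightarrow> e \<noteq> f \<Longrightarrow> edist E e f = Suc (card {k\<in>K. S k e f})"
  shows "edge_hyper_wiener E = 2 * edge_wiener E
    + (\<Sum>k\<in>K. \<Sum>l\<in>K - {k}. real (card {(e, f). e \<in> E \<and> f \<in> E \<and> e \<noteq> f \<and> S k e f \<and> S l e f})) / 4
    - real (card E choose 2)"
proof -
  define X where "X = {(e, f). e \<in> E \<and> f \<in> E \<and> e \<noteq> f}"
  define s where "s x = card {k\<in>K. S k (fst x) (snd x)}" for x
  define N where "N = real (card X)"
  define S1 where "S1 = real (\<Sum>x\<in>X. s x)"
  define C where "C = (\<Sum>k\<in>K. \<Sum>l\<in>K - {k}. real (card {x\<in>X. S k (fst x) (snd x) \<and> S l (fst x) (snd x)}))"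
  have "finite X" unfolding X_def using \<open>finite E\<close> by (auto intro: finite_subset[of _ "E \<times> E"])
  have edist_s: "real (edist E e f) = 1 + real (s (e, f))" if "(e, f) \<in> X" for e f
    using that edist unfolding X_def s_def by simp
  have "(\<Sum>(e, f)\<in>X. real (edist E e f)) = (\<Sum>x\<in>X. 1 + real (s x))"
    by (intro sum.cong) (auto simp: edist_s)
  then have W: "(\<Sum>(e, f)\<in>X. real (edist E e f)) = N + S1"
    by (simp add: N_def S1_def sum.distrib)
  have "(\<Sum>(e, f)\<in>X. real (edist E e f) ^ 2) = (\<Sum>x\<in>X. 1 + 2 * real (s x) + real (s x ^ 2))"
    by (intro sum.cong) (auto simp: edist_s power2_eq_square algebra_simps)
  also have "\<dots> = N + 2 * S1 + real (\<Sum>x\<in>X. s x ^ 2)"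
    by (simp add: N_def S1_def sum.distrib sum_distrib_left)
  also have "real (\<Sum>x\<in>X. s x ^ 2) = S1 + C"
    unfolding s_def S1_def C_def
    by (simp only: sum_card_filter_squared[OF \<open>finite X\<close> \<open>finite K\<close>]) simp
  finally have WW: "(\<Sum>(e, f)\<in>X. real (edist E e f) ^ 2) = N + 3 * S1 + C" by simp
  have "N = 2 * real (card E choose 2)"
    using card_offdiag_pairs[OF \<open>finite E\<close>] unfolding N_def X_def by simp
  moreover have "{x\<in>X. S k (fst x) (snd x) \<and> S l (fst x) (snd x)}
      = {(e, f). e \<in> E \<and> f \<in> E \<and> e \<noteq> f \<and> S k e f \<and> S l e f}" for k l
    unfolding X_def by auto
  ultimately show ?thesis
    using W WW unfolding edge_hyper_wiener_def edge_wiener_def X_def[symmetric] C_def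
    by (simp add: field_simps)
qed

definition crosses :: "'a set set \<Rightarrow> 'a set \<Rightarrow> 'a set \<Rightarrow> 'a set \<Rightarrow> 'a set \<Rightarrow> bool" where
  "crosses E A B e f \<longleftrightarrow>
     e \<in> induced_edges E A \<and> f \<in> induced_edges E B \<or> e \<in> induced_edges E B \<and> f \<in> induced_edges E A"

lemma card_pairs_crossing_two_cuts:
  assumes "finite E"
    and disjA: "induced_edges E A \<inter> induced_edges E A' = {}"
    and disjB: "induced_edges E B \<inter> induced_edges E B' = {}"
  shows "card {(e, f). e \<in> E \<and> f \<in> E \<and> e \<noteq> f \<and> crosses E A A' e f \<and> crosses E B B' e f}
    = 2 * (card (induced_edges E A \<inter> induced_edges E B) * card (induced_edges E A' \<inter> induced_edges E B')
         + card (induced_edges E A \<inter> induced_edges E B') * card (induced_edges E A' \<inter> induced_edges E B))"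
proof -
  define P Q R T where "P = induced_edges E A \<inter> induced_edges E B"
    and "Q = induced_edges E A' \<inter> induced_edges E B'"
    and "R = induced_edges E A \<inter> induced_edges E B'"
    and "T = induced_edges E A' \<inter> induced_edges E B"
  have fin: "finite P" "finite Q" "finite R" "finite T"
    using \<open>finite E\<close> unfolding P_def Q_def R_def T_def induced_edges_def by auto
  have card_sym_product: "card (X \<times> Y \<union> Y \<times> X) = 2 * (card X * card Y)"
    if "finite X" "finite Y" "X \<inter> Y = {}" for X Y :: "'a set set"
  proof -
    have "card (X \<times> Y \<union> Y \<times> X) = card (X \<times> Y) + card (Y \<times> X)"
      by (rule card_Un_disjoint) (use that in auto)
    then show ?thesis by (simp add: card_cartesian_product)
  qed
  have "{(e, f). e \<in> E \<and> f \<in> E \<and> e \<noteq> f \<and> crosses E A A' e f \<and> crosses E B B' e f}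
      = (P \<times> Q \<union> Q \<times> P) \<union> (R \<times> T \<union> T \<times> R)"
    using disjA disjB unfolding P_def Q_def R_def T_def crosses_def induced_edges_def by blast
  also have "card \<dots> = card (P \<times> Q \<union> Q \<times> P) + card (R \<times> T \<union> T \<times> R)"
    by (rule card_Un_disjoint) (use fin disjA disjB in \<open>auto simp: P_def Q_def R_def T_def\<close>)
  also have "\<dots> = 2 * (card P * card Q + card R * card T)"
    using fin disjA disjB by (simp add: card_sym_product P_def Q_def R_def T_def Int_ac)
  finally show ?thesis unfolding P_def Q_def R_def T_def .
qed

lemma vdist_adj:
  assumes "adj E x y"
  shows "vdist E x y = 1"
  unfolding vdist_def gdist_def
proof (rule Least_equality)
  show "(adj E ^^ 1) x y" using assms by (simp only: relpowp_1)
next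
  fix m assume "(adj E ^^ m) x y"
  then show "1 \<le> m" using assms by (cases m) (auto simp: adj_def)
qed

lemma line_walk_of_vertex_walk:
  assumes "(adj E ^^ m) p q" "e \<in> E" "p \<in> e" "f \<in> E" "q \<in> f"
  shows "\<exists>j\<le>Suc m. (ladj E ^^ j) e f"
  using assms
proof (induction m arbitrary: q f)
  case 0
  then have "e = f \<or> ladj E e f" by (auto simp: ladj_def)
  then show ?case
  proof
    assume "e = f" then show ?thesis by (intro exI[of _ 0]) simp
  next
    assume "ladj E e f" then show ?thesis using relpowp_1[of "ladj E"] by (metis One_nat_def le_refl)
  qed
next
  case (Suc m)
  then obtain w where w: "(adj E ^^ m) p w" "adj E w q" by (meson relpowp_Suc_E)
  then have g: "{w, q} \<in> E" by (simp add: adj_def)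
  then obtain j where j: "j \<le> Suc m" "(ladj E ^^ j) e {w, q}" using Suc.IH[OF w(1)] Suc.prems by blast
  show ?case
  proof (cases "{w, q} = f")
    case True then show ?thesis using j by (metis le_SucI)
  next
    case False
    then have "ladj E {w, q} f" using g Suc.prems(4,5) by (auto simp: ladj_def)
    then show ?thesis using j by (metis Suc_le_mono relpowp_Suc_I)
  qed
qed

locale hamming_embedding =
  fixes V :: "'a set" and E :: "'a set set" and n :: nat and F :: "'a \<Rightarrow> nat \<Rightarrow> bool"
  assumes graph: "simple_graph V E"
    and isometric: "\<And>x y. x \<in> V \<Longrightarrow> y \<in> V \<Longrightarrow> vdist E x y = card {i. i < n \<and> F x i \<noteq> F y i}"
begin

definition diff_coords :: "'a \<Rightarrow> 'a \<Rightarrow> nat set" where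
  "diff_coords x y = {i. i < n \<and> F x i \<noteq> F y i}"

definition label :: "'a set \<Rightarrow> nat" where
  "label g = (THE i. i < n \<and> (\<exists>x\<in>g. \<exists>y\<in>g. F x i \<noteq> F y i))"

definition separates :: "nat \<Rightarrow> 'a set \<Rightarrow> 'a set \<Rightarrow> bool" where
  "separates i e f \<longleftrightarrow> (\<forall>p\<in>e. \<forall>q\<in>f. F p i \<noteq> F q i)"

lemma edgeE:
  assumes "g \<in> E"
  obtains x y where "x \<in> V" "y \<in> V" "x \<noteq> y" "g = {x, y}"
  using graph assms unfolding simple_graph_def by blast

lemma edge_nonempty: "g \<in> E \<Longrightarrow> g \<noteq> {}"
  by (erule edgeE) simp

lemma finite_E: "finite E"
proof -
  have "E \<subseteq> Pow V" by (auto elim: edgeE)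
  then show ?thesis using graph finite_subset unfolding simple_graph_def by blast
qed

lemma edge_subset_V: "g \<in> E \<Longrightarrow> g \<subseteq> V"
  by (auto elim: edgeE)

lemma finite_diff_coords: "finite (diff_coords x y)"
  unfolding diff_coords_def by simp

lemma vdist_eq_card_diff_coords: "x \<in> V \<Longrightarrow> y \<in> V \<Longrightarrow> vdist E x y = card (diff_coords x y)"
  unfolding diff_coords_def by (rule isometric)

lemma card_diff_coords_triangle: "card (diff_coords p r) \<le> card (diff_coords p q) + card (diff_coords q r)"
proof -
  have "card (diff_coords p r) \<le> card (diff_coords p q \<union> diff_coords q r)"
    by (rule card_mono) (auto simp: finite_diff_coords diff_coords_def)
  also have "\<dots> \<le> card (diff_coords p q) + card (diff_coords q r)" by (rule card_Un_le)
  finally show ?thesis .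
qed

lemma diff_coords_edge:
  assumes "g \<in> E" "x \<in> g" "y \<in> g" "x \<noteq> y"
  shows "diff_coords x y = {label g}"
proof -
  obtain a b where "a \<in> V" "b \<in> V" "g = {a, b}" using assms(1) by (rule edgeE)
  then have g: "g = {x, y}" and xy: "x \<in> V" "y \<in> V" using assms(2-4) by auto
  have "adj E x y" using assms g by (simp add: adj_def)
  then have "card (diff_coords x y) = 1"
    using vdist_adj vdist_eq_card_diff_coords[OF xy] by metis
  then obtain i where i: "diff_coords x y = {i}" by (rule card_1_singletonE)
  have "label g = i" unfolding label_def
  proof (rule the_equality)
    show "i < n \<and> (\<exists>x\<in>g. \<exists>y\<in>g. F x i \<noteq> F y i)" using i g unfolding diff_coords_def by auto
  next
    fix j assume "j < n \<and> (\<exists>x\<in>g. \<exists>y\<in>g. F x j \<noteq> F y j)"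
    then have "j \<in> diff_coords x y" using g unfolding diff_coords_def by auto
    then show "j = i" using i by auto
  qed
  then show ?thesis using i by simp
qed

lemma label_less:
  assumes "g \<in> E"
  shows "label g < n"
proof -
  obtain x y where "x \<noteq> y" "g = {x, y}" using assms by (rule edgeE)
  then have "label g \<in> diff_coords x y" using diff_coords_edge[OF assms] by simp
  then show ?thesis unfolding diff_coords_def by simp
qed

lemma edge_differs_at_label:
  "g \<in> E \<Longrightarrow> x \<in> g \<Longrightarrow> y \<in> g \<Longrightarrow> x \<noteq> y \<Longrightarrow> F x (label g) \<noteq> F y (label g)"
  using diff_coords_edge[of g x y] by (auto simp: diff_coords_def)

lemma edge_agrees_off_label:
  assumes "g \<in> E" "x \<in> g" "y \<in> g" "i < n" "i \<noteq> label g"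
  shows "F x i = F y i"
  using diff_coords_edge[OF assms(1-3)] assms(4,5) by (cases "x = y") (auto simp: diff_coords_def)

lemma edge_differs_iff_label:
  assumes "g \<in> E" "x \<in> g" "y \<in> g" "x \<noteq> y" "i < n"
  shows "F x i \<noteq> F y i \<longleftrightarrow> i = label g"
  using edge_differs_at_label edge_agrees_off_label assms by metis

lemma card_diff_coords_eq_sum: "int (card (diff_coords x y)) = (\<Sum>i<n. of_bool (F x i \<noteq> F y i))"
proof -
  have "diff_coords x y = {i\<in>{..<n}. F x i \<noteq> F y i}" unfolding diff_coords_def by auto
  then show ?thesis by (simp only: card_filter_eq_sum_of_bool[OF finite_lessThan]) simp
qed

lemma four_point_condition_iff_label:
  assumes g: "g \<in> E" "x \<in> g" "y \<in> g" "x \<noteq> y" and h: "h \<in> E" "u \<in> h" "v \<in> h" "u \<noteq> v"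
  shows "card (diff_coords x u) + card (diff_coords y v) = card (diff_coords x v) + card (diff_coords y u)
    \<longleftrightarrow> label g \<noteq> label h"
proof -
  define t :: "nat \<Rightarrow> int" where "t i = of_bool (F x i \<noteq> F u i) + of_bool (F y i \<noteq> F v i)
    - of_bool (F x i \<noteq> F v i) - of_bool (F y i \<noteq> F u i)" for i
  have "t i \<noteq> 0 \<longleftrightarrow> F x i \<noteq> F y i \<and> F u i \<noteq> F v i" for i
    unfolding t_def by auto
  then have t_nonzero: "t i \<noteq> 0 \<longleftrightarrow> i = label g \<and> i = label h" if "i < n" for i
    using edge_differs_iff_label[OF g that] edge_differs_iff_label[OF h that] by simp
  have "int (card (diff_coords x u)) + int (card (diff_coords y v))
      - int (card (diff_coords x v)) - int (card (diff_coords y u)) = (\<Sum>i<n. t i)"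
    unfolding card_diff_coords_eq_sum t_def by (simp add: sum.distrib sum_subtractf)
  also have "\<dots> = (\<Sum>i\<in>{label g} \<inter> {label h}. t i)"
    using label_less[OF g(1)] t_nonzero by (intro sum.mono_neutral_right) auto
  also have "\<dots> \<noteq> 0 \<longleftrightarrow> label g = label h"
    using label_less[OF g(1)] t_nonzero by (cases "label g = label h") auto
  finally show ?thesis by linarith
qed

lemma Theta_iff_same_label:
  assumes "g \<in> E" "h \<in> E"
  shows "Theta E g h \<longleftrightarrow> label g = label h"
proof -
  obtain x y where xy: "x \<in> V" "y \<in> V" "x \<noteq> y" "g = {x, y}" using assms(1) by (rule edgeE)
  obtain u v where uv: "u \<in> V" "v \<in> V" "u \<noteq> v" "h = {u, v}" using assms(2) by (rule edgeE)
  have "Theta E g h \<longleftrightarrow> vdist E x u + vdist E y v \<noteq> vdist E x v + vdist E y u"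
    unfolding Theta_def xy(4) uv(4) by (auto simp: doubleton_eq_iff add.commute)
  also have "\<dots> \<longleftrightarrow> label g = label h"
    using four_point_condition_iff_label[OF assms(1) _ _ xy(3) assms(2) _ _ uv(3)] xy uv
    by (simp add: vdist_eq_card_diff_coords)
  finally show ?thesis .
qed

lemma walk_avoiding_label_keeps_coord:
  assumes "(adj E')\<^sup>*\<^sup>* x y" "E' \<subseteq> E" "\<And>g. g \<in> E' \<Longrightarrow> label g \<noteq> i" "i < n"
  shows "F x i = F y i"
  using assms(1)
proof (induction rule: rtranclp_induct)
  case (step y z)
  then have "{y, z} \<in> E" "label {y, z} \<noteq> i" using assms(2,3) by (auto simp: adj_def)
  then show ?case using step.IH edge_agrees_off_label assms(4) by blast
qed simp

lemma line_walk_endpoints: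
  "(ladj E ^^ Suc m) e f \<Longrightarrow> \<exists>p\<in>e. \<exists>q\<in>f. card (diff_coords p q) \<le> m"
proof (induction m arbitrary: f)
  case 0
  then obtain p where "p \<in> e" "p \<in> f" by (auto simp: ladj_def)
  then show ?case unfolding diff_coords_def by auto
next
  case (Suc m)
  then obtain g where g: "(ladj E ^^ Suc m) e g" "ladj E g f" by (meson relpowp_Suc_E)
  obtain p q where pq: "p \<in> e" "q \<in> g" "card (diff_coords p q) \<le> m" using Suc.IH[OF g(1)] by blast
  obtain r where r: "r \<in> g" "r \<in> f" "g \<in> E" using g(2) by (auto simp: ladj_def)
  have "card (diff_coords q r) \<le> 1"
    using diff_coords_edge[OF r(3) pq(2) r(1)] by (cases "q = r") (auto simp: diff_coords_def)
  then have "card (diff_coords p r) \<le> Suc m"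
    using card_diff_coords_triangle[of p r q] pq(3) by linarith
  then show ?case using pq(1) r(2) by blast
qed

lemma separating_subset_diff_coords:
  "p \<in> e \<Longrightarrow> q \<in> f \<Longrightarrow> {i. i < n \<and> separates i e f} \<subseteq> diff_coords p q"
  unfolding separates_def diff_coords_def by blast

lemma exists_endpoints_diff_coords_separating:
  assumes e: "e \<in> E" and f: "f \<in> E"
  shows "\<exists>p\<in>e. \<exists>q\<in>f. diff_coords p q \<subseteq> {i. i < n \<and> separates i e f}"
proof -
  obtain x y where xy: "x \<noteq> y" "e = {x, y}" using e by (rule edgeE)
  obtain u v where uv: "u \<noteq> v" "f = {u, v}" using f by (rule edgeE)
  \<comment> \<open>choose q to agree with x at the label of f, then p to agree with q at the label of e\<close>
  obtain q where q: "q \<in> f" "F q (label f) = F x (label f)"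
    using edge_differs_at_label[OF f, of u v] uv by (cases "F u (label f) = F x (label f)") auto
  obtain p where p: "p \<in> e" "F p (label e) = F q (label e)"
    using edge_differs_at_label[OF e, of x y] xy by (cases "F x (label e) = F q (label e)") auto
  have "F p (label f) = F q (label f)"
    using edge_agrees_off_label[OF e p(1), of x "label f"] xy q p(2) label_less[OF f]
    by (cases "label f = label e") auto
  then have "i \<noteq> label e" "i \<noteq> label f" if "i \<in> diff_coords p q" for i
    using that p(2) unfolding diff_coords_def by auto
  then have "separates i e f" if "i \<in> diff_coords p q" for i
    using that edge_agrees_off_label[OF e p(1)] edge_agrees_off_label[OF f q(1)]
    unfolding separates_def diff_coords_def by (metis (mono_tags, lifting) mem_Collect_eq)
  then show ?thesis using p(1) q(1) unfolding diff_coords_def by blast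
qed

end

locale connected_hamming_embedding = hamming_embedding +
  assumes connected: "connected_graph V E"
begin

lemma walk_of_vdist:
  assumes "p \<in> V" "q \<in> V"
  shows "(adj E ^^ vdist E p q) p q"
proof -
  have "\<exists>m. (adj E ^^ m) p q"
    using connected assms unfolding connected_graph_def by (simp add: rtranclp_power)
  then show ?thesis unfolding vdist_def gdist_def by (rule LeastI_ex)
qed

lemma diff_coord_is_label:
  assumes "p \<in> V" "q \<in> V" "i \<in> diff_coords p q"
  shows "\<exists>g\<in>E. label g = i"
proof (rule ccontr)
  assume "\<not> (\<exists>g\<in>E. label g = i)"
  moreover have "(adj E)\<^sup>*\<^sup>* p q" using connected assms(1,2) unfolding connected_graph_def by blast
  ultimately have "F p i = F q i"
    using walk_avoiding_label_keeps_coord[of E p q i] assms(3) unfolding diff_coords_def by blast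
  then show False using assms(3) unfolding diff_coords_def by simp
qed

lemma edist_eq_Suc_card_separating:
  assumes e: "e \<in> E" and f: "f \<in> E" and "e \<noteq> f"
  shows "edist E e f = Suc (card {i. i < n \<and> separates i e f})"
proof -
  let ?s = "card {i. i < n \<and> separates i e f}"
  have lower: "Suc ?s \<le> m" if "(ladj E ^^ m) e f" for m
  proof (cases m)
    case 0 then show ?thesis using that \<open>e \<noteq> f\<close> by simp
  next
    case (Suc m')
    with that have "(ladj E ^^ Suc m') e f" by (simp only:)
    then obtain p q where "p \<in> e" "q \<in> f" "card (diff_coords p q) \<le> m'"
      using line_walk_endpoints by blast
    moreover from this have "?s \<le> card (diff_coords p q)"
      by (intro card_mono finite_diff_coords separating_subset_diff_coords)
    ultimately show ?thesis using Suc by simp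
  qed
  obtain p q where pq: "p \<in> e" "q \<in> f" "diff_coords p q \<subseteq> {i. i < n \<and> separates i e f}"
    using exists_endpoints_diff_coords_separating[OF e f] by blast
  have V: "p \<in> V" "q \<in> V" using pq e f edge_subset_V by auto
  have "card (diff_coords p q) \<le> ?s" using pq(3) by (rule card_mono[rotated]) simp
  moreover obtain j where j: "j \<le> Suc (card (diff_coords p q))" "(ladj E ^^ j) e f"
    using line_walk_of_vertex_walk[OF walk_of_vdist[OF V] e pq(1) f pq(2)]
    unfolding vdist_eq_card_diff_coords[OF V] by blast
  ultimately have "j = Suc ?s" using lower[OF j(2)] by linarith
  then have walk: "(ladj E ^^ Suc ?s) e f" using j(2) by simp
  show ?thesis unfolding edist_def gdist_def using walk lower by (rule Least_equality)
qed

end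

lemma component_memberE:
  assumes "C \<in> components V E"
  obtains x where "x \<in> V" "C = {y \<in> V. (adj E)\<^sup>*\<^sup>* x y}"
  using assms unfolding components_def by blast

lemma in_some_component:
  assumes "x \<in> V"
  obtains C where "C \<in> components V E" "x \<in> C"
  using assms unfolding components_def by blast

lemma opposite_constant_iff_all_differ:
  fixes F :: "'a \<Rightarrow> bool"
  assumes "a \<in> A" "b \<in> B"
  shows "(\<forall>x\<in>A. F x = \<beta>) \<and> (\<forall>y\<in>B. F y = (\<not> \<beta>)) \<or> (\<forall>x\<in>A. F x = (\<not> \<beta>)) \<and> (\<forall>y\<in>B. F y = \<beta>)
    \<longleftrightarrow> (\<forall>x\<in>A. \<forall>y\<in>B. F x \<noteq> F y)"
  using assms by (cases "F a = \<beta>"; auto; metis)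

locale theta_cuts = connected_hamming_embedding +
  fixes d :: nat and Ec :: "nat \<Rightarrow> 'a set set" and U U' :: "nat \<Rightarrow> 'a set"
  assumes classes: "bij_betw Ec {1..d} (Theta_classes E)"
    and cuts: "\<And>k. k \<in> {1..d} \<Longrightarrow> components V (E - Ec k) = {U k, U' k}"
begin

definition class_label :: "nat \<Rightarrow> nat" where
  "class_label k = label (SOME g. g \<in> Ec k)"

lemma Theta_rel_Image_singleton: "g \<in> E \<Longrightarrow> Theta_rel E `` {g} = {h \<in> E. label h = label g}"
  unfolding Theta_rel_def using Theta_iff_same_label by auto

lemma Ec_image: "Ec ` {1..d} = E // Theta_rel E"
  using bij_betw_imp_surj_on[OF classes] unfolding Theta_classes_def .

lemma Ec_eq_label_class:
  assumes "k \<in> {1..d}"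
  shows "Ec k = {h \<in> E. label h = class_label k}" "Ec k \<noteq> {}"
proof -
  have "Ec k \<in> E // Theta_rel E" using Ec_image assms by blast
  then obtain g where g: "g \<in> E" "Ec k = {h \<in> E. label h = label g}"
    by (rule quotientE) (simp add: Theta_rel_Image_singleton)
  then have "g \<in> Ec k" by simp
  then have "(SOME g. g \<in> Ec k) \<in> Ec k" by (rule someI)
  then have "class_label k = label g" unfolding class_label_def g(2) by simp
  then show "Ec k = {h \<in> E. label h = class_label k}" "Ec k \<noteq> {}" using g by auto
qed

lemma class_label_inj: "inj_on class_label {1..d}"
proof (rule inj_onI)
  fix k l assume "k \<in> {1..d}" "l \<in> {1..d}" "class_label k = class_label l"
  then have "Ec k = Ec l" using Ec_eq_label_class by auto
  then show "k = l"
    using inj_onD[OF bij_betw_imp_inj_on[OF classes]] \<open>k \<in> {1..d}\<close> \<open>l \<in> {1..d}\<close> by blast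
qed

lemma label_is_class_label:
  assumes "g \<in> E"
  shows "\<exists>k\<in>{1..d}. class_label k = label g"
proof -
  have "Theta_rel E `` {g} \<in> Ec ` {1..d}" unfolding Ec_image using assms by (rule quotientI)
  then obtain k where k: "k \<in> {1..d}" "Ec k = {h \<in> E. label h = label g}"
    using Theta_rel_Image_singleton[OF assms] by auto
  then have "g \<in> Ec k" using assms by simp
  then have "class_label k = label g" using Ec_eq_label_class(1)[OF k(1)] by simp
  then show ?thesis using k(1) by blast
qed

lemma class_label_less:
  assumes "k \<in> {1..d}"
  shows "class_label k < n"
proof -
  obtain g where "g \<in> Ec k" using Ec_eq_label_class(2)[OF assms] by blast
  then have "g \<in> E" "label g = class_label k" using Ec_eq_label_class(1)[OF assms] by auto
  then show ?thesis using label_less by metis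
qed

lemma sidesE:
  assumes k: "k \<in> {1..d}"
  obtains \<beta> where "U k = {y \<in> V. F y (class_label k) = \<beta>}" "U' k = {y \<in> V. F y (class_label k) = (\<not> \<beta>)}"
proof -
  let ?i = "class_label k" and ?E' = "E - Ec k"
  have cut: "components V ?E' = {U k, U' k}" using cuts[OF k] .
  \<comment> \<open>removing the class of coordinate i leaves only edges along which that coordinate is constant\<close>
  have coord_constant: "\<exists>\<beta>. \<forall>y\<in>C. F y ?i = \<beta>" if C: "C \<in> components V ?E'" for C
  proof -
    obtain x where x: "x \<in> V" "C = {y \<in> V. (adj ?E')\<^sup>*\<^sup>* x y}" using C by (rule component_memberE)
    have "F x ?i = F y ?i" if "y \<in> C" for y
    proof (rule walk_avoiding_label_keeps_coord)
      show "(adj ?E')\<^sup>*\<^sup>* x y" using that x(2) by blast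
      show "\<And>g. g \<in> ?E' \<Longrightarrow> label g \<noteq> ?i" using Ec_eq_label_class(1)[OF k] by blast
    qed (use class_label_less[OF k] in auto)
    then show ?thesis by blast
  qed
  have UC: "U k \<in> components V ?E'" "U' k \<in> components V ?E'" unfolding cut by simp_all
  obtain \<beta> where \<beta>: "\<forall>y\<in>U k. F y ?i = \<beta>" using coord_constant[OF UC(1)] by blast
  obtain \<beta>' where \<beta>': "\<forall>y\<in>U' k. F y ?i = \<beta>'" using coord_constant[OF UC(2)] by blast
  have cover: "y \<in> U k \<or> y \<in> U' k" if "y \<in> V" for y
  proof -
    obtain C where "C \<in> components V ?E'" "y \<in> C" using \<open>y \<in> V\<close> by (rule in_some_component)
    then show ?thesis unfolding cut by auto
  qed
  have sub: "U k \<subseteq> V" "U' k \<subseteq> V" using UC by (auto elim: component_memberE)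
  obtain g where "g \<in> Ec k" using Ec_eq_label_class(2)[OF k] by blast
  then have "g \<in> E" "label g = ?i" using Ec_eq_label_class(1)[OF k] by auto
  moreover obtain a b where "a \<in> V" "b \<in> V" "a \<noteq> b" "g = {a, b}" using \<open>g \<in> E\<close> by (rule edgeE)
  ultimately have "a \<in> V" "b \<in> V" "F a ?i \<noteq> F b ?i" using edge_differs_at_label[of g a b] by auto
  then have "\<beta>' = (\<not> \<beta>)" using cover \<beta> \<beta>' by metis
  then have "U k = {y \<in> V. F y ?i = \<beta>}" "U' k = {y \<in> V. F y ?i = (\<not> \<beta>)}"
    using \<beta> \<beta>' cover sub by auto
  then show ?thesis by (rule that)
qed

lemma sides_induced_edges_disjoint:
  assumes "k \<in> {1..d}"
  shows "induced_edges E (U k) \<inter> induced_edges E (U' k) = {}"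
proof -
  obtain \<beta> where "U k = {y \<in> V. F y (class_label k) = \<beta>}" "U' k = {y \<in> V. F y (class_label k) = (\<not> \<beta>)}"
    using assms by (rule sidesE)
  then have "U k \<inter> U' k = {}" by auto
  then show ?thesis unfolding induced_edges_def using edge_nonempty by fastforce
qed

lemma crosses_iff_separates:
  assumes k: "k \<in> {1..d}" and e: "e \<in> E" and f: "f \<in> E"
  shows "crosses E (U k) (U' k) e f \<longleftrightarrow> separates (class_label k) e f"
proof -
  let ?i = "class_label k"
  obtain \<beta> where \<beta>: "U k = {y \<in> V. F y ?i = \<beta>}" "U' k = {y \<in> V. F y ?i = (\<not> \<beta>)}"
    using k by (rule sidesE)
  have side: "g \<in> induced_edges E (U k) \<longleftrightarrow> (\<forall>y\<in>g. F y ?i = \<beta>)"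
    "g \<in> induced_edges E (U' k) \<longleftrightarrow> (\<forall>y\<in>g. F y ?i = (\<not> \<beta>))" if "g \<in> E" for g
    using edge_subset_V[OF that] that unfolding induced_edges_def \<beta> by auto
  obtain p0 q0 where "p0 \<in> e" "q0 \<in> f" using edge_nonempty[OF e] edge_nonempty[OF f] by blast
  then show ?thesis unfolding crosses_def separates_def side[OF e] side[OF f]
    by (rule opposite_constant_iff_all_differ)
qed

lemma card_crossing_eq_card_separating:
  assumes e: "e \<in> E" and f: "f \<in> E"
  shows "card {k \<in> {1..d}. crosses E (U k) (U' k) e f} = card {i. i < n \<and> separates i e f}"
proof -
  let ?K = "{k \<in> {1..d}. crosses E (U k) (U' k) e f}"
  have image_eq: "class_label ` ?K = {i. i < n \<and> separates i e f}"
  proof (intro equalityI subsetI)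
    fix i assume i: "i \<in> {i. i < n \<and> separates i e f}"
    obtain p q where "p \<in> e" "q \<in> f" using edge_nonempty[OF e] edge_nonempty[OF f] by blast
    with i have "i \<in> diff_coords p q" "p \<in> V" "q \<in> V"
      using e f edge_subset_V unfolding separates_def diff_coords_def by auto
    then obtain g where "g \<in> E" "label g = i" using diff_coord_is_label by blast
    then obtain k where "k \<in> {1..d}" "class_label k = i" using label_is_class_label by blast
    with i show "i \<in> class_label ` ?K" using crosses_iff_separates[OF _ e f] by auto
  qed (use crosses_iff_separates[OF _ e f] class_label_less in auto)
  have "inj_on class_label ?K" using class_label_inj by (rule inj_on_subset) blast
  then show ?thesis unfolding image_eq[symmetric] by (rule card_image[symmetric])
qed

lemma edist_eq_Suc_card_crossing:
  "e \<in> E \<Longrightarrow> f \<in> E \<Longrightarrow> e \<noteq> f \<Longrightarrow> edist E e f = Suc (card {k \<in> {1..d}. crosses E (U k) (U' k) e f})"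
  using edist_eq_Suc_card_separating card_crossing_eq_card_separating by simp

end

theorem theorem3p4:
  fixes V :: "'a set" and E :: "'a set set" and d :: nat
    and Ec :: "nat \<Rightarrow> 'a set set" and U U' :: "nat \<Rightarrow> 'a set"
  assumes pc: "partial_cube V E"
    and conn: "connected_graph V E"
    and classes: "bij_betw Ec {1..d} (Theta_classes E)"
    and comps: "\<And>k. k \<in> {1..d} \<Longrightarrow> U k \<noteq> U' k \<and> components V (E - Ec k) = {U k, U' k}"
  shows "edge_hyper_wiener E =
     2 * edge_wiener E
     + (\<Sum>k = 1..d - 1. \<Sum>l = k + 1..d.
          real (card (induced_edges E (U k) \<inter> induced_edges E (U l))
                * card (induced_edges E (U' k) \<inter> induced_edges E (U' l))
              + card (induced_edges E (U k) \<inter> induced_edges E (U' l))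
                * card (induced_edges E (U' k) \<inter> induced_edges E (U l))))
     - real (card E choose 2)"
proof -
  obtain n :: nat and F :: "'a \<Rightarrow> nat \<Rightarrow> bool" where "simple_graph V E"
    and "\<forall>x\<in>V. \<forall>y\<in>V. vdist E x y = card {i. i < n \<and> F x i \<noteq> F y i}"
    using pc unfolding partial_cube_def by blast
  then interpret theta_cuts V E n F d Ec U U'
    using conn classes comps by unfold_locales blast+
  define P where "P k l = real (card (induced_edges E (U k) \<inter> induced_edges E (U l))
                * card (induced_edges E (U' k) \<inter> induced_edges E (U' l))
              + card (induced_edges E (U k) \<inter> induced_edges E (U' l))
                * card (induced_edges E (U' k) \<inter> induced_edges E (U l)))" for k l
  let ?pairs = "\<lambda>k l. {(e, f). e \<in> E \<and> f \<in> E \<and> e \<noteq> f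
    \<and> crosses E (U k) (U' k) e f \<and> crosses E (U l) (U' l) e f}"
  have "(\<Sum>k\<in>{1..d}. \<Sum>l\<in>{1..d} - {k}. real (card (?pairs k l)))
      = (\<Sum>k\<in>{1..d}. \<Sum>l\<in>{1..d} - {k}. 2 * P k l)"
    using card_pairs_crossing_two_cuts[OF finite_E sides_induced_edges_disjoint sides_induced_edges_disjoint]
    by (intro sum.cong refl) (simp add: P_def)
  also have "\<dots> = 4 * (\<Sum>k = 1..d - 1. \<Sum>l = k + 1..d. P k l)"
    by (subst sum_offdiag_atLeastAtMost_eq_twice) (auto simp: P_def Int_commute sum_distrib_left)
  finally show ?thesis
    using edge_hyper_wiener_eq_via_cuts[OF finite_E finite_atLeastAtMost edist_eq_Suc_card_crossing]
    unfolding P_def by simp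
qed

end
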